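(* Let $G$ be a finite group (not necessarily abelian, written additively) of even order $q$, and let $f:G\to G$ be two-to-one (every element of the image of $f$ has exactly two preimages). Then \[\mathrm{pres}(f)\le \lceil 2\sqrt{q}\rceil-1.\] Moreover, if $q$ is a perfect square, then $\mathrm{pres}(f)\le 2\sqrt{q}-2$.
   Context: For a function $g:G\to G$, $V(g)$ denotes the number of distinct values of $g$, i.e. $V(g)=\#\{g(x):x\in G\}$. A permutation of $G$ is a bijection $G\to G$. For functions $f,h:G\to G$, $f-h$ is the pointwise function $x\mapsto f(x)-h(x)$, and $g+f$ is $x\mapsto g(x)+f(x)$. The permutation resemblance of $f:G\to G$ is $\mathrm{pres}(f)=\min\{V(f-h): h \text{ a permutation of } G\}$, equivalently $\mathrm{pres}(f)=\min\{V(g): g:G\to G,\ g+f \text{ is a permutation of } G\}$. *)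

theory Defs
  imports Complex_Main
begin

definition num_values :: "('a \<Rightarrow> 'a) \<Rightarrow> nat" where
  "num_values g = card (range g)"

definition pres :: "('a::{group_add,finite} \<Rightarrow> 'a) \<Rightarrow> nat" where
  "pres f = Min {num_values (\<lambda>x. f x - h x) | h. bij h}"

definition two_to_one :: "('a \<Rightarrow> 'b) \<Rightarrow> bool" where
  "two_to_one f \<longleftrightarrow> (\<forall>y\<in>range f. card (f -` {y}) = 2)"

end

theory Submission
  imports Defs
begin

text \<open>
  Split the group into two halves \<open>A\<close> and \<open>B\<close> on each of which \<open>f\<close> is injective with image
  \<open>Y = range f\<close>. Letting \<open>h = f\<close> on \<open>B\<close> costs only the value \<open>0\<close> of \<open>f - h\<close>, so it remains
  to map \<open>A\<close> bijectively onto the complement of \<open>Y\<close> using few differences. This is done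
  greedily: averaging over all shifts \<open>e\<close>, some \<open>e\<close> sends at least \<open>|A|\<^sup>2/q\<close> points \<open>x\<close> of the
  current domain to a free target \<open>-e + f x\<close>, all with the single difference \<open>e\<close>. After
  \<open>d\<close> steps at most \<open>q/(2 + d)\<close> points remain, which are matched arbitrarily; \<open>d + 2 = \<lceil>\<surd>q\<rceil>\<close>
  gives the bound. A single step in fact always leaves at most \<open>q/4\<close> points rather than \<open>q/3\<close>,
  which saves one value and gives \<open>2\<surd>q - 2\<close> for perfect squares \<open>q \<ge> 16\<close>; for \<open>q = 4\<close> a single
  shift avoiding \<open>Y - Y\<close> matches all of \<open>A\<close>.
\<close>

text \<open>If \<open>r - r' \<ge> r\<^sup>2/q\<close>, then \<open>r' \<le> r(q - r)/q\<close>, which is at most \<open>q/4\<close>, and at most \<open>q/(j + 1)\<close> when \<open>r \<le> q/j\<close>.\<close>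

lemma greedy_remainder_le_quarter:
  fixes r r' q :: nat
  assumes "r' \<le> r" "r * r \<le> (r - r') * q"
  shows "r' * 4 \<le> q"
proof (cases "q = 0")
  case True then show ?thesis using assms by simp
next
  case False
  have "int (r * r) \<le> int ((r - r') * q)" using assms(2) by (simp only: of_nat_le_iff)
  then have "int r * int r \<le> (int r - int r') * int q" using assms(1) by simp
  moreover have "0 \<le> (int q - 2 * int r)^2" by simp
  ultimately have "int r' * 4 * int q \<le> int q * int q" by (simp add: power2_eq_square algebra_simps)
  then have "int (r' * 4 * q) \<le> int (q * q)" by simp
  then have "r' * 4 * q \<le> q * q" by (simp only: of_nat_le_iff)
  then show ?thesis using False by simp
qed

lemma greedy_remainder_le:
  fixes r r' q j :: nat
  assumes "r' \<le> r" "r * r \<le> (r - r') * q" "r * j \<le> q" "1 \<le> j"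
  shows "r' * (j + 1) \<le> q"
proof (cases "q = 0")
  case True then show ?thesis using assms by simp
next
  case False
  have "r \<le> q" using assms(3,4) by (metis le_trans mult_le_mono2 nat_mult_1_right)
  then have nonneg: "0 \<le> (int q - int r * int j) * (int q - int r)"
    using assms(3) by (intro mult_nonneg_nonneg) (simp_all flip: of_nat_mult)
  have "int (r * r) \<le> int ((r - r') * q)" using assms(2) by (simp only: of_nat_le_iff)
  then have "int r' * int q \<le> int r * int q - int r * int r" using assms(1) by (simp add: algebra_simps)
  then have "int r' * int q * int (j + 1) \<le> (int r * int q - int r * int r) * int (j + 1)"
    by (rule mult_right_mono) simp
  also have "\<dots> = int q * int q - (int q - int r * int j) * (int q - int r) - int r * int r"
    by (simp add: algebra_simps)
  also have "\<dots> \<le> int q * int q"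
    using nonneg zero_le_square[of "int r"] by linarith
  finally have "int (r' * (j + 1) * q) \<le> int (q * q)" by (simp add: algebra_simps)
  then have "r' * (j + 1) * q \<le> q * q" by (simp only: of_nat_le_iff)
  then show ?thesis using False by simp
qed

lemma diff_minus_add_cancel: "p - (-e + p) = (e::'a::group_add)"
  by (simp add: diff_conv_add_uminus minus_add add.assoc del: add_uminus_conv_diff)

lemma card_shift_preimage:
  fixes p :: "'a::{group_add,finite}"
  shows "card {e. -e + p \<in> R} = card R"
proof -
  have "bij (\<lambda>e. -e + p)"
    using bij_comp[OF bij_uminus bij_plus_right[of p]] by (simp add: comp_def)
  then have "card ((\<lambda>e. -e + p) -` R) = card R"
    by (intro card_vimage_inj) (auto simp: bij_def)
  then show ?thesis by (simp add: vimage_def)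
qed

text \<open>Shifts act on the left, so that \<open>\<phi> x - (-e + \<phi> x) = e\<close> holds without commutativity.\<close>

lemma exists_shift_many_hits:
  fixes \<phi> :: "'b \<Rightarrow> 'a::{group_add,finite}"
  assumes "finite A"
  shows "\<exists>e. card A * card R \<le> card {x\<in>A. -e + \<phi> x \<in> R} * card (UNIV :: 'a set)"
proof (rule ccontr)
  assume "\<not> ?thesis"
  then have less: "card {x\<in>A. -e + \<phi> x \<in> R} * card (UNIV :: 'a set) < card A * card R" for e
    by (simp add: not_le)
  have "(\<Sum>e\<in>UNIV. card {x\<in>A. -e + \<phi> x \<in> R}) = card R * card A"
    using assms by (intro sum_multicount) (simp_all add: card_shift_preimage)
  then have "(\<Sum>e\<in>UNIV. card {x\<in>A. -e + \<phi> x \<in> R} * card (UNIV :: 'a set)) = card A * card R * card (UNIV :: 'a set)"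
    by (simp flip: sum_distrib_right)
  moreover have "(\<Sum>e\<in>UNIV. card {x\<in>A. -e + \<phi> x \<in> R} * card (UNIV :: 'a set)) < (\<Sum>e\<in>(UNIV::'a set). card A * card R)"
    using less by (intro sum_strict_mono) auto
  ultimately show False by simp
qed

lemma bij_betw_extend_by_shift:
  fixes \<phi> h' :: "'b \<Rightarrow> 'a::group_add"
  assumes inj: "inj_on \<phi> A" and "S \<subseteq> A" and shift: "(\<lambda>x. -e + \<phi> x) ` S \<subseteq> R"
    and h': "bij_betw h' (A - S) (R - (\<lambda>x. -e + \<phi> x) ` S)"
  obtains h where "bij_betw h A R"
    and "(\<lambda>x. \<phi> x - h x) ` A \<subseteq> insert e ((\<lambda>x. \<phi> x - h' x) ` (A - S))"
proof
  let ?T = "\<lambda>x. -e + \<phi> x"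
  define h where "h x = (if x \<in> S then ?T x else h' x)" for x
  have "inj_on ?T S"
    using inj \<open>S \<subseteq> A\<close> by (auto simp: inj_on_def)
  then have "bij_betw h S (?T ` S)"
    by (auto simp: bij_betw_def h_def inj_on_def)
  moreover have "bij_betw h (A - S) (R - ?T ` S)"
    using h' by (rule bij_betw_cong[THEN iffD1, rotated]) (auto simp: h_def)
  ultimately have "bij_betw h (S \<union> (A - S)) (?T ` S \<union> (R - ?T ` S))"
    by (rule bij_betw_combine) auto
  moreover have "S \<union> (A - S) = A" "?T ` S \<union> (R - ?T ` S) = R"
    using \<open>S \<subseteq> A\<close> shift by auto
  ultimately show "bij_betw h A R" by simp
  show "(\<lambda>x. \<phi> x - h x) ` A \<subseteq> insert e ((\<lambda>x. \<phi> x - h' x) ` (A - S))"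
    by (auto simp: h_def diff_minus_add_cancel)
qed

lemma greedy_shift_step:
  fixes \<phi> :: "'b \<Rightarrow> 'a::{group_add,finite}"
  assumes inj: "inj_on \<phi> A" and "finite A" and "card R = card A"
  obtains A' R' where "A' \<subseteq> A" "card R' = card A'"
    and "card A * card A \<le> (card A - card A') * card (UNIV :: 'a set)"
    and "\<And>h'. bij_betw h' A' R' \<Longrightarrow>
      \<exists>h. bij_betw h A R \<and> card ((\<lambda>x. \<phi> x - h x) ` A) \<le> Suc (card ((\<lambda>x. \<phi> x - h' x) ` A'))"
proof -
  obtain e where e: "card A * card R \<le> card {x\<in>A. -e + \<phi> x \<in> R} * card (UNIV :: 'a set)"
    using exists_shift_many_hits \<open>finite A\<close> by blast
  define S where "S = {x\<in>A. -e + \<phi> x \<in> R}"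
  let ?T = "\<lambda>x. -e + \<phi> x"
  have "S \<subseteq> A" "?T ` S \<subseteq> R" by (auto simp: S_def)
  have "card (?T ` S) = card S"
    using inj \<open>S \<subseteq> A\<close> by (intro card_image) (auto simp: inj_on_def)
  then have "card (R - ?T ` S) = card (A - S)"
    using \<open>S \<subseteq> A\<close> \<open>?T ` S \<subseteq> R\<close> \<open>finite A\<close> \<open>card R = card A\<close>
    by (simp add: card_Diff_subset finite_subset)
  moreover have "card A - card (A - S) = card S"
    using \<open>S \<subseteq> A\<close> \<open>finite A\<close> by (simp add: card_Diff_subset card_mono finite_subset)
  moreover have "bij_betw h' (A - S) (R - ?T ` S) \<Longrightarrow>
      \<exists>h. bij_betw h A R \<and> card ((\<lambda>x. \<phi> x - h x) ` A) \<le> Suc (card ((\<lambda>x. \<phi> x - h' x) ` (A - S)))"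
    for h'
  proof -
    assume "bij_betw h' (A - S) (R - ?T ` S)"
    then obtain h where "bij_betw h A R"
      and sub: "(\<lambda>x. \<phi> x - h x) ` A \<subseteq> insert e ((\<lambda>x. \<phi> x - h' x) ` (A - S))"
      using bij_betw_extend_by_shift[OF inj \<open>S \<subseteq> A\<close> \<open>?T ` S \<subseteq> R\<close>] by blast
    have "card ((\<lambda>x. \<phi> x - h x) ` A) \<le> card (insert e ((\<lambda>x. \<phi> x - h' x) ` (A - S)))"
      using sub \<open>finite A\<close> by (intro card_mono) auto
    also have "\<dots> \<le> Suc (card ((\<lambda>x. \<phi> x - h' x) ` (A - S)))"
      using \<open>finite A\<close> by (simp add: card_insert_if)
    finally show ?thesis using \<open>bij_betw h A R\<close> by blast
  qed
  ultimately show ?thesis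
    using that[of "A - S" "R - ?T ` S"] e \<open>card R = card A\<close> by (auto simp: S_def)
qed

lemma greedy_bij_betw_few_differences:
  fixes \<phi> :: "'b \<Rightarrow> 'a::{group_add,finite}"
  assumes "inj_on \<phi> A" "finite A" "card R = card A"
    and "card A * j \<le> card (UNIV :: 'a set)" "1 \<le> j"
  shows "\<exists>h. bij_betw h A R \<and>
    card ((\<lambda>x. \<phi> x - h x) ` A) \<le> d + card (UNIV :: 'a set) div (j + d)"
  using assms
proof (induction d arbitrary: A R j)
  case 0
  obtain h where "bij_betw h A R"
    using finite_same_card_bij[of A R] "0.prems"(2,3) by auto
  moreover have "card ((\<lambda>x. \<phi> x - h x) ` A) \<le> card A"
    using \<open>finite A\<close> by (rule card_image_le)
  moreover have "card A \<le> card (UNIV :: 'a set) div j"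
    using "0.prems"(4,5) by (simp add: less_eq_div_iff_mult_less_eq)
  ultimately show ?case by auto
next
  case (Suc d)
  obtain A' R' where "A' \<subseteq> A" "card R' = card A'"
    and shrink: "card A * card A \<le> (card A - card A') * card (UNIV :: 'a set)"
    and extend: "\<And>h'. bij_betw h' A' R' \<Longrightarrow>
      \<exists>h. bij_betw h A R \<and> card ((\<lambda>x. \<phi> x - h x) ` A) \<le> Suc (card ((\<lambda>x. \<phi> x - h' x) ` A'))"
    using greedy_shift_step[OF Suc.prems(1-3)] by blast
  have "card A' * (j + 1) \<le> card (UNIV :: 'a set)"
    using greedy_remainder_le[OF _ shrink Suc.prems(4,5)] \<open>A' \<subseteq> A\<close> \<open>finite A\<close> by (simp add: card_mono)
  then obtain h' where "bij_betw h' A' R'"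
    and "card ((\<lambda>x. \<phi> x - h' x) ` A') \<le> d + card (UNIV :: 'a set) div (j + 1 + d)"
    using Suc.IH[of A' R' "j + 1"] Suc.prems(1,2) \<open>A' \<subseteq> A\<close> \<open>card R' = card A'\<close>
    by (auto intro: inj_on_subset finite_subset)
  then show ?case using extend by fastforce
qed

lemma pres_le_num_values:
  fixes f h :: "'a::{group_add,finite} \<Rightarrow> 'a"
  assumes "bij h"
  shows "pres f \<le> num_values (\<lambda>x. f x - h x)"
proof -
  have "{num_values (\<lambda>x. f x - h x) | h. bij h} \<subseteq> {..card (UNIV :: 'a set)}"
    by (auto simp: num_values_def card_mono)
  then have "finite {num_values (\<lambda>x. f x - h x) | h. bij h}"
    by (rule finite_subset) simp
  then show ?thesis unfolding pres_def using assms by (intro Min_le) auto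
qed

lemma pres_le_Suc_on_complement:
  fixes f h :: "'a::{group_add,finite} \<Rightarrow> 'a"
  assumes "inj_on f B" and h: "bij_betw h (-B) (-(f ` B))"
  shows "pres f \<le> Suc (card ((\<lambda>x. f x - h x) ` (-B)))"
proof -
  define g where "g x = (if x \<in> B then f x else h x)" for x
  have "bij_betw g B (f ` B)"
    using \<open>inj_on f B\<close> by (simp add: bij_betw_def g_def inj_on_def)
  moreover have "bij_betw g (-B) (-(f ` B))"
    using h by (rule bij_betw_cong[THEN iffD1, rotated]) (simp add: g_def)
  ultimately have "bij_betw g (B \<union> -B) (f ` B \<union> -(f ` B))"
    by (rule bij_betw_combine) simp
  then have "bij g" by simp
  have "range (\<lambda>x. f x - g x) \<subseteq> insert 0 ((\<lambda>x. f x - h x) ` (-B))"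
    by (auto simp: g_def)
  then have "num_values (\<lambda>x. f x - g x) \<le> card (insert 0 ((\<lambda>x. f x - h x) ` (-B)))"
    unfolding num_values_def by (intro card_mono) simp_all
  also have "\<dots> \<le> Suc (card ((\<lambda>x. f x - h x) ` (-B)))"
    by (simp add: card_insert_if)
  finally show ?thesis using pres_le_num_values[OF \<open>bij g\<close>, of f] by linarith
qed

lemma two_to_one_split:
  fixes f :: "'a \<Rightarrow> 'b"
  assumes "two_to_one f"
  obtains B where "inj_on f B" "inj_on f (-B)" "f ` B = range f" "f ` (-B) = range f"
proof
  have fibre: "card (f -` {y}) = 2" if "y \<in> range f" for y
    using assms that unfolding two_to_one_def by blast
  define B where "B = inv f ` range f"
  have f_inv: "f (inv f y) = y" if "y \<in> range f" for y
    using that by (rule f_inv_into_f)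
  show "inj_on f B"
    by (auto simp: B_def inj_on_def f_inv)
  show "f ` B = range f"
    by (auto simp: B_def image_image f_inv)
  show "inj_on f (-B)"
  proof (rule inj_onI, rule ccontr)
    fix x1 x2 assume "x1 \<in> -B" "x2 \<in> -B" "f x1 = f x2" "x1 \<noteq> x2"
    moreover have "inv f (f x1) \<in> B" by (simp add: B_def)
    ultimately have "card {x1, x2, inv f (f x1)} = 3" by (auto simp: card_insert_if)
    moreover have "{x1, x2, inv f (f x1)} \<subseteq> f -` {f x1}"
      using \<open>f x1 = f x2\<close> by (auto simp: f_inv)
    then have "card {x1, x2, inv f (f x1)} \<le> 2"
      using fibre[of "f x1"] card_mono[of "f -` {f x1}"] by (metis card.infinite rangeI zero_neq_numeral)
    ultimately show False by simp
  qed
  show "f ` (-B) = range f"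
  proof (intro subset_antisym subsetI)
    fix y assume "y \<in> range f"
    then obtain u v where "f -` {y} = {u, v}" "u \<noteq> v"
      using fibre[of y] by (auto simp: card_2_iff)
    then obtain x where "f x = y" "x \<noteq> inv f y"
      by (metis insertI1 insertI2 vimage_singleton_eq)
    moreover have "x \<notin> B"
      using \<open>f x = y\<close> \<open>x \<noteq> inv f y\<close> by (auto simp: B_def f_inv)
    ultimately show "y \<in> f ` (-B)" by auto
  qed auto
qed

lemma two_to_one_card_UNIV:
  fixes f :: "'a::finite \<Rightarrow> 'b"
  assumes "two_to_one f"
  shows "card (UNIV :: 'a set) = 2 * card (range f)"
proof -
  obtain B where "inj_on f B" "inj_on f (-B)" "f ` B = range f" "f ` (-B) = range f"
    using two_to_one_split[OF assms] by blast
  then have "card B = card (range f)" "card (-B) = card (range f)"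
    by (metis card_image)+
  moreover have "card B + card (-B) = card (UNIV :: 'a set)"
    using card_Un_disjoint[of B "-B"] by simp
  ultimately show ?thesis by simp
qed

lemma two_to_one_half:
  fixes f :: "'a::{group_add,finite} \<Rightarrow> 'a"
  assumes "two_to_one f"
  obtains A where "inj_on f A" "card A * 2 = card (UNIV :: 'a set)"
    and "card (-(f ` A)) = card A"
    and "\<And>h. bij_betw h A (-(f ` A)) \<Longrightarrow> pres f \<le> Suc (card ((\<lambda>x. f x - h x) ` A))"
proof -
  obtain B where B: "inj_on f B" "inj_on f (-B)" "f ` B = range f" "f ` (-B) = range f"
    using two_to_one_split[OF assms] by blast
  have "card (-B) = card (range f)"
    using B(2,4) by (metis card_image)
  moreover have "card (-(f ` (-B))) = card (UNIV :: 'a set) - card (range f)"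
    using B(4) by (simp add: Compl_eq_Diff_UNIV card_Diff_subset)
  ultimately show ?thesis
    using that[of "-B"] B two_to_one_card_UNIV[OF assms] pres_le_Suc_on_complement[OF B(1)]
    by auto
qed

lemma pres_two_to_one_le:
  fixes f :: "'a::{group_add,finite} \<Rightarrow> 'a"
  assumes "two_to_one f" "2 \<le> s"
  shows "pres f \<le> s - 1 + card (UNIV :: 'a set) div s"
proof -
  obtain A where "inj_on f A" "card A * 2 = card (UNIV :: 'a set)" "card (-(f ` A)) = card A"
    and pres_le: "\<And>h. bij_betw h A (-(f ` A)) \<Longrightarrow> pres f \<le> Suc (card ((\<lambda>x. f x - h x) ` A))"
    using two_to_one_half[OF assms(1)] by blast
  then obtain h where "bij_betw h A (-(f ` A))"
    and bound: "card ((\<lambda>x. f x - h x) ` A) \<le> (s - 2) + card (UNIV :: 'a set) div (2 + (s - 2))"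
    using greedy_bij_betw_few_differences[of f A "-(f ` A)" 2 "s - 2"] by auto
  have "2 + (s - 2) = s" using assms(2) by simp
  then show ?thesis
    using pres_le[OF \<open>bij_betw h A (-(f ` A))\<close>] bound by simp
qed

lemma pres_two_to_one_le_sharp:
  fixes f :: "'a::{group_add,finite} \<Rightarrow> 'a"
  assumes "two_to_one f" "4 \<le> s"
  shows "pres f \<le> s - 2 + card (UNIV :: 'a set) div s"
proof -
  obtain A where "inj_on f A" "card A * 2 = card (UNIV :: 'a set)" "card (-(f ` A)) = card A"
    and pres_le: "\<And>h. bij_betw h A (-(f ` A)) \<Longrightarrow> pres f \<le> Suc (card ((\<lambda>x. f x - h x) ` A))"
    using two_to_one_half[OF assms(1)] by blast
  then obtain A' R' where "A' \<subseteq> A" "card R' = card A'"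
    and shrink: "card A * card A \<le> (card A - card A') * card (UNIV :: 'a set)"
    and extend: "\<And>h'. bij_betw h' A' R' \<Longrightarrow>
      \<exists>h. bij_betw h A (-(f ` A)) \<and> card ((\<lambda>x. f x - h x) ` A) \<le> Suc (card ((\<lambda>x. f x - h' x) ` A'))"
    using greedy_shift_step[OF \<open>inj_on f A\<close> finite] by blast
  have "card A' * 4 \<le> card (UNIV :: 'a set)"
    using greedy_remainder_le_quarter[OF _ shrink] \<open>A' \<subseteq> A\<close> by (simp add: card_mono)
  then obtain h' where "bij_betw h' A' R'"
    and bound: "card ((\<lambda>x. f x - h' x) ` A') \<le> (s - 4) + card (UNIV :: 'a set) div (4 + (s - 4))"
    using greedy_bij_betw_few_differences[of f A' R' 4 "s - 4"] \<open>inj_on f A\<close> \<open>A' \<subseteq> A\<close> \<open>card R' = card A'\<close>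
    by (auto intro: inj_on_subset)
  obtain h where "bij_betw h A (-(f ` A))"
    and "card ((\<lambda>x. f x - h x) ` A) \<le> Suc (card ((\<lambda>x. f x - h' x) ` A'))"
    using extend[OF \<open>bij_betw h' A' R'\<close>] by blast
  moreover have "4 + (s - 4) = s" using assms(2) by simp
  ultimately show ?thesis
    using pres_le bound by fastforce
qed

lemma pres_two_to_one_card_four:
  fixes f :: "'a::{group_add,finite} \<Rightarrow> 'a"
  assumes "two_to_one f" "card (UNIV :: 'a set) = 4"
  shows "pres f \<le> 2"
proof -
  obtain A where "inj_on f A" "card A * 2 = card (UNIV :: 'a set)" "card (-(f ` A)) = card A"
    and pres_le: "\<And>h. bij_betw h A (-(f ` A)) \<Longrightarrow> pres f \<le> Suc (card ((\<lambda>x. f x - h x) ` A))"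
    using two_to_one_half[OF assms(1)] by blast
  then have "card (f ` A) = 2"
    using assms(2) by (simp add: card_image)
  then obtain y1 y2 where Y: "f ` A = {y1, y2}"
    by (auto simp: card_2_iff)
  have "card {0, y1 - y2, y2 - y1} < card (UNIV :: 'a set)"
    using assms(2) card_insert_le[of "{y1 - y2, y2 - y1}"] by (simp add: card_insert_if)
  then have "{0, y1 - y2, y2 - y1} \<noteq> UNIV"
    by auto
  then obtain e where e: "e \<notin> {0, y1 - y2, y2 - y1}"
    by blast
  have "-e + f x \<notin> f ` A" if "x \<in> A" for x
  proof
    assume "-e + f x \<in> f ` A"
    then have "f x \<in> {y1, y2}" "-e + f x \<in> {y1, y2}"
      using Y \<open>x \<in> A\<close> by auto
    moreover have "a - b \<in> {0, y1 - y2, y2 - y1}" if "a \<in> {y1, y2}" "b \<in> {y1, y2}" for a b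
      using that by auto
    ultimately have "f x - (-e + f x) \<in> {0, y1 - y2, y2 - y1}"
      by blast
    then show False
      using e by (simp only: diff_minus_add_cancel)
  qed
  then have shift: "(\<lambda>x. -e + f x) ` A \<subseteq> -(f ` A)"
    by auto
  moreover have "card ((\<lambda>x. -e + f x) ` A) = card (-(f ` A))"
    using \<open>inj_on f A\<close> \<open>card (-(f ` A)) = card A\<close>
    by (simp add: card_image inj_on_def)
  ultimately have "(\<lambda>x. -e + f x) ` A = -(f ` A)"
    by (intro card_subset_eq) simp_all
  then have "bij_betw id (A - A) (-(f ` A) - (\<lambda>x. -e + f x) ` A)"
    by simp
  then obtain h where "bij_betw h A (-(f ` A))" and "(\<lambda>x. f x - h x) ` A \<subseteq> {e}"
    using bij_betw_extend_by_shift[OF \<open>inj_on f A\<close> subset_refl shift] by auto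
  then have "card ((\<lambda>x. f x - h x) ` A) \<le> card {e}"
    by (intro card_mono) simp_all
  then show ?thesis
    using pres_le[OF \<open>bij_betw h A (-(f ` A))\<close>] by simp
qed

lemma ceiling_sqrt_add_div_le:
  fixes q :: nat
  assumes "0 < q"
  shows "int (nat \<lceil>sqrt q\<rceil> + q div nat \<lceil>sqrt q\<rceil>) \<le> \<lceil>2 * sqrt q\<rceil>"
proof -
  define s where "s = nat \<lceil>sqrt q\<rceil>"
  have "real s = of_int \<lceil>sqrt q\<rceil>"
    unfolding s_def by simp
  then have s_ge: "sqrt q \<le> s" and s_less: "s < sqrt q + 1"
    by linarith+
  have "0 < sqrt q" using assms by simp
  then have "1 \<le> s" using s_ge by linarith
  have "(s - sqrt q) * (s - sqrt q) < 1 * 1"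
    using s_ge s_less by (intro mult_strict_mono') auto
  then have "s * s + q < (2 * sqrt q + 1) * s"
    using \<open>1 \<le> s\<close> by (simp add: algebra_simps)
  then have "s + q / s < 2 * sqrt q + 1"
    using \<open>1 \<le> s\<close> by (simp add: field_simps)
  moreover have "real (q div s) \<le> q / s"
    by (rule of_nat_div_le_of_nat)
  ultimately have "s + real (q div s) < of_int \<lceil>2 * sqrt q\<rceil> + 1"
    using le_of_int_ceiling[of "2 * sqrt q"] by linarith
  then show ?thesis
    unfolding s_def by linarith
qed

lemma pres_two_to_one_le_ceiling:
  fixes f :: "'a::{group_add,finite} \<Rightarrow> 'a"
  assumes "two_to_one f"
  shows "int (pres f) \<le> \<lceil>2 * sqrt (card (UNIV :: 'a set))\<rceil> - 1"
proof -
  let ?q = "card (UNIV :: 'a set)"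
  define s where "s = nat \<lceil>sqrt ?q\<rceil>"
  have "0 < card (range f)"
    by (simp add: card_gt_0_iff)
  then have "1 < sqrt ?q"
    using two_to_one_card_UNIV[OF assms] by simp
  then have "2 \<le> s"
    unfolding s_def by linarith
  then have "pres f + 1 \<le> s + ?q div s"
    using pres_two_to_one_le[OF assms \<open>2 \<le> s\<close>] by simp
  then have "int (pres f + 1) \<le> int (s + ?q div s)"
    by (simp only: of_nat_le_iff)
  also have "\<dots> \<le> \<lceil>2 * sqrt ?q\<rceil>"
    unfolding s_def by (rule ceiling_sqrt_add_div_le) (simp add: card_gt_0_iff)
  finally show ?thesis
    by simp
qed

lemma pres_two_to_one_le_square:
  fixes f :: "'a::{group_add,finite} \<Rightarrow> 'a"
  assumes "two_to_one f" "card (UNIV :: 'a set) = k * k"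
  shows "pres f \<le> 2 * k - 2"
proof -
  have "0 < card (range f)"
    by (simp add: card_gt_0_iff)
  then have "even (k * k)" "2 \<le> k * k"
    using two_to_one_card_UNIV[OF assms(1)] assms(2) by auto
  then have "even k" "2 \<le> k"
    by (auto dest: less_2_cases simp: not_le[symmetric])
  then have "k = 2 \<or> 4 \<le> k"
    by (auto elim!: evenE)
  then show ?thesis
  proof
    assume "k = 2"
    then show ?thesis using pres_two_to_one_card_four[OF assms(1)] assms(2) by simp
  next
    assume "4 \<le> k"
    then show ?thesis using pres_two_to_one_le_sharp[OF assms(1)] assms(2) by fastforce
  qed
qed

theorem theorem1p2:
  fixes f :: "'a::{group_add,finite} \<Rightarrow> 'a"
  assumes "even (card (UNIV :: 'a set))"
    and "two_to_one f"
  shows "int (pres f) \<le> \<lceil>2 * sqrt (real (card (UNIV :: 'a set)))\<rceil> - 1 \<and>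
         ((\<exists>k::nat. card (UNIV :: 'a set) = k^2) \<longrightarrow>
            real (pres f) \<le> 2 * sqrt (real (card (UNIV :: 'a set))) - 2)"
proof (intro conjI impI)
  show "int (pres f) \<le> \<lceil>2 * sqrt (real (card (UNIV :: 'a set)))\<rceil> - 1"
    using pres_two_to_one_le_ceiling[OF assms(2)] .
  assume "\<exists>k::nat. card (UNIV :: 'a set) = k^2"
  then obtain k where k: "card (UNIV :: 'a set) = k * k"
    by (auto simp: power2_eq_square)
  then have "1 \<le> k"
    using card_gt_0_iff[of "UNIV :: 'a set"] by (cases k) auto
  then show "real (pres f) \<le> 2 * sqrt (real (card (UNIV :: 'a set))) - 2"
    using pres_two_to_one_le_square[OF assms(2) k] k by (simp add: of_nat_diff)
qed

end
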